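(* Let $X$ be a nonempty set, $S$ a semigroup and $\phi':X\to E(S)$ a one-to-one mapping. If $\phi'$ induces a unique skeleton $A$ of $S$, then $\langle A\rangle$ is the smallest regular subsemigroup of $S$ containing $X\phi'$. In particular, if moreover $\langle A\rangle=S$, then $S$ is regular and has no proper regular subsemigroup containing $X\phi'$ (i.e. $(S,\phi')$ is weakly idempotent generated by $X$).
   Context: Let $1$ be a symbol not in $X$. Elements of height $\ge 2$ are triples $g=(g^l,g^c,g^r)$; $\Gamma_0(X)=\{1\}$, $\Gamma_1(X)=X$, each $x\in X$ identified with $(1,x,1)$; for $i\ge 2$, $\Gamma_i(X)$ is the set of triples $g\in\Gamma_{i-1}(X)\times\Gamma_{i-2}(X)\times\Gamma_{i-1}(X)$ with $g^l\neq g^r$ and $g^c\in\{(g^l)^l,(g^l)^r\}\cap\{(g^r)^l,(g^r)^r\}$; $\Gamma(X)=\bigcup_{i\ge0}\Gamma_i(X)$. $S^1$ is $S$ with an identity adjoined if necessary; $E(\cdot)$ is the set of idempotents. For idempotents $e,f$ of a semigroup $R$, $S(e,f)=\{h\in E(R): fh=h=he,\ ehf=ef\}$. A skeleton mapping is a mapping $\phi:\Gamma(X)\to E(S^1)$ such that (i) $\phi|_X$ is one-to-one with $X\phi\subseteq E(S)$; (ii) $(1\phi)(g\phi)=g\phi=(g\phi)(1\phi)$ for all $g\in X$; (iii) $g\phi\in S\big((g^r\phi)(g^c\phi),(g^c\phi)(g^l\phi)\big)$ (in $S^1$) for all $g\in\Gamma_i(X)$, $i\ge2$. A skeleton of $S$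 induced by $\phi'$ is a set $(\Gamma(X)\setminus\{1\})\phi$ where $\phi$ is a skeleton mapping with $\phi|_X=\phi'$; "$\phi'$ induces a unique skeleton $A$" means $A$ is the only such set. *)

theory Defs
  imports Main
begin

text \<open>Elements of Gamma(X): the symbol 1 (One), generators x (Gen x), and triples
  (Tri l c r) = (g^l, g^c, g^r).\<close>
datatype 'a gam = One | Gen 'a | Tri "'a gam" "'a gam" "'a gam"

text \<open>Components; each x is identified with the triple (1, x, 1).\<close>
fun lft :: "'a gam \<Rightarrow> 'a gam" where
  "lft One = One" | "lft (Gen x) = One" | "lft (Tri l c r) = l"
fun cen :: "'a gam \<Rightarrow> 'a gam" where
  "cen One = One" | "cen (Gen x) = Gen x" | "cen (Tri l c r) = c"
fun rgt :: "'a gam \<Rightarrow> 'a gam" where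
  "rgt One = One" | "rgt (Gen x) = One" | "rgt (Tri l c r) = r"

fun Gam :: "'a set \<Rightarrow> nat \<Rightarrow> 'a gam set" where
  "Gam X 0 = {One}"
| "Gam X (Suc 0) = Gen ` X"
| "Gam X (Suc (Suc i)) =
     {Tri l c r | l c r. l \<in> Gam X (Suc i) \<and> c \<in> Gam X i \<and> r \<in> Gam X (Suc i) \<and> l \<noteq> r
        \<and> c \<in> {lft l, rgt l} \<inter> {lft r, rgt r}}"

definition GamAll :: "'a set \<Rightarrow> 'a gam set" where
  "GamAll X = (\<Union>i. Gam X i)"

text \<open>S^1 is modelled inside the monoid 'b option, None being an adjoined identity.
  If S already has an identity, S^1 = S (i.e. range Some); otherwise S^1 = S plus None.\<close>
fun omult :: "'b::semigroup_mult option \<Rightarrow> 'b option \<Rightarrow> 'b option" where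
  "omult None y = y"
| "omult (Some a) None = Some a"
| "omult (Some a) (Some b) = Some (a * b)"

definition has_identity :: "'b::semigroup_mult itself \<Rightarrow> bool" where
  "has_identity _ \<longleftrightarrow> (\<exists>e::'b. \<forall>s. e * s = s \<and> s * e = s)"

definition S1 :: "'b::semigroup_mult option set" where
  "S1 = (if has_identity TYPE('b) then range Some else UNIV)"

definition E1 :: "'b::semigroup_mult option set" where
  "E1 = {e \<in> S1. omult e e = e}"

definition ES :: "'b::semigroup_mult set" where
  "ES = {e. e * e = e}"

definition Sand :: "'b::semigroup_mult option \<Rightarrow> 'b option \<Rightarrow> 'b option set" where
  "Sand e f = {h \<in> E1. omult f h = h \<and> h = omult h e \<and> omult (omult e h) f = omult e f}"

definition skeleton_mapping :: "'a set \<Rightarrow> ('a gam \<Rightarrow> 'b::semigroup_mult option) \<Rightarrow> bool" where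
  "skeleton_mapping X \<phi> \<longleftrightarrow>
     (\<forall>g\<in>GamAll X. \<phi> g \<in> E1)
   \<and> inj_on (\<lambda>x. \<phi> (Gen x)) X
   \<and> (\<forall>x\<in>X. \<phi> (Gen x) \<in> Some ` ES)
   \<and> (\<forall>x\<in>X. omult (\<phi> One) (\<phi> (Gen x)) = \<phi> (Gen x) \<and> \<phi> (Gen x) = omult (\<phi> (Gen x)) (\<phi> One))
   \<and> (\<forall>i\<ge>2. \<forall>g\<in>Gam X i.
        \<phi> g \<in> Sand (omult (\<phi> (rgt g)) (\<phi> (cen g))) (omult (\<phi> (cen g)) (\<phi> (lft g))))"

definition extends :: "'a set \<Rightarrow> ('a gam \<Rightarrow> 'b option) \<Rightarrow> ('a \<Rightarrow> 'b) \<Rightarrow> bool" where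
  "extends X \<phi> \<phi>' \<longleftrightarrow> (\<forall>x\<in>X. \<phi> (Gen x) = Some (\<phi>' x))"

text \<open>The skeleton (Gamma(X) - {1})phi, viewed as a subset of S (all its elements lie in S).\<close>
definition skeleton_of :: "'a set \<Rightarrow> ('a gam \<Rightarrow> 'b option) \<Rightarrow> 'b set" where
  "skeleton_of X \<phi> = {s. Some s \<in> \<phi> ` (GamAll X - {One})}"

definition induces_unique_skeleton :: "'a set \<Rightarrow> ('a \<Rightarrow> 'b::semigroup_mult) \<Rightarrow> 'b set \<Rightarrow> bool" where
  "induces_unique_skeleton X \<phi>' A \<longleftrightarrow>
     (\<exists>\<phi>. skeleton_mapping X \<phi> \<and> extends X \<phi> \<phi>')
   \<and> (\<forall>\<phi>. skeleton_mapping X \<phi> \<and> extends X \<phi> \<phi>' \<longrightarrow> skeleton_of X \<phi> = A)"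

definition subsemigroup :: "'b::semigroup_mult set \<Rightarrow> bool" where
  "subsemigroup T \<longleftrightarrow> (\<forall>a\<in>T. \<forall>b\<in>T. a * b \<in> T)"

definition regular_set :: "'b::semigroup_mult set \<Rightarrow> bool" where
  "regular_set T \<longleftrightarrow> (\<forall>a\<in>T. \<exists>x\<in>T. a * x * a = a)"

definition generated :: "'b::semigroup_mult set \<Rightarrow> 'b set" where
  "generated A = \<Inter>{T. subsemigroup T \<and> A \<subseteq> T}"

end

theory Submission
  imports Defs
begin

(* In a regular subsemigroup T containing X phi', the sandwich set of two idempotents
   of T meets T; choosing such sandwich elements recursively along Gamma(X) yields a skeleton
   mapping extending phi' with values in T, so by uniqueness A is contained in T.

   Regularity of <A> holds for every skeleton. View Gamma(X) as a graph joining each g to its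
   children g^l and g^r. Every element of <A> is the phi-product along a walk whose ends differ
   from 1: consecutive factors are connected by descending to 1 and ascending again, which does not
   change the product by idempotency and the sandwich conditions. A valley a, b, c (b a child of
   both a and c) can be removed without changing the product: a, b, a becomes a, and otherwise b is
   replaced by the triple (c, b, a), which lies higher. So every walk has the product of a walk that
   first ascends and then descends; if s is the product of such a walk and t that of the reversed
   walk, then s t s = s, and t lies in <A> because such a walk avoids 1. *)

interpretation omult: monoid omult None
proof
  fix a b c :: "'b::semigroup_mult option"
  show "omult (omult a b) c = omult a (omult b c)"
    by (cases a; cases b; cases c) (auto simp: mult.assoc)
  show "omult None a = a" by simp
  show "omult a None = a" by (cases a) auto
qed

lemma omult_idem_left: "omult e e = e \<Longrightarrow> omult e (omult e a) = omult e a"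
  by (metis omult.assoc)

lemma Some_in_S1 [simp]: "Some s \<in> S1"
  by (simp add: S1_def)

text \<open>The identity of S^1. It must be used instead of None when S has an identity,
  because None is then not an element of S^1.\<close>
definition S1_unit :: "'b::semigroup_mult option" where
  "S1_unit = (if has_identity TYPE('b) then Some (SOME e. \<forall>s. e * s = s \<and> s * e = s) else None)"

lemma S1_unit:
  fixes s :: "'b::semigroup_mult"
  shows "(S1_unit :: 'b option) \<in> S1" "omult S1_unit (Some s) = Some s" "omult (Some s) S1_unit = Some s"
proof -
  show "(S1_unit :: 'b option) \<in> S1" by (simp add: S1_unit_def S1_def)
  have "omult S1_unit (Some s) = Some s \<and> omult (Some s) S1_unit = Some s"
  proof (cases "has_identity TYPE('b)")
    case True
    then have "\<exists>e::'b. \<forall>s. e * s = s \<and> s * e = s" by (simp add: has_identity_def)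
    then have "\<forall>s. (SOME e::'b. \<forall>s. e * s = s \<and> s * e = s) * s = s
                 \<and> s * (SOME e::'b. \<forall>s. e * s = s \<and> s * e = s) = s"
      by (rule someI_ex)
    then show ?thesis using True by (simp add: S1_unit_def)
  qed (simp add: S1_unit_def)
  then show "omult S1_unit (Some s) = Some s" "omult (Some s) S1_unit = Some s" by auto
qed

lemma S1_unit_idem: "omult (S1_unit :: 'b::semigroup_mult option) S1_unit = S1_unit"
proof (cases "S1_unit :: 'b option")
  case (Some a)
  then show ?thesis using S1_unit(2)[of a] by simp
qed simp

lemma Sand_absorbs_outer:
  assumes h: "h \<in> Sand (omult x y) (omult y z)" and y: "omult y y = y"
  shows "omult (omult h x) h = h" "omult (omult h z) h = h"
proof -
  have hh: "omult h h = h" using h by (auto simp: Sand_def E1_def)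
  have f: "omult (omult y z) h = h" and e: "h = omult h (omult x y)"
    and s: "omult (omult (omult x y) h) (omult y z) = omult (omult x y) (omult y z)"
    using h by (auto simp: Sand_def)
  have ef: "omult (omult x y) (omult y z) = omult x (omult y z)"
    using omult_idem_left[OF y] by (simp add: omult.assoc)
  have hxyzh: "h = omult h (omult (omult x (omult y z)) h)"
  proof -
    have "h = omult (omult h h) h" using hh by simp
    also have "\<dots> = omult (omult (omult h (omult x y)) h) (omult (omult y z) h)" using e f by simp
    also have "\<dots> = omult h (omult (omult (omult (omult x y) h) (omult y z)) h)"
      by (simp add: omult.assoc)
    also have "\<dots> = omult h (omult (omult x (omult y z)) h)" using s ef by simp
    finally show ?thesis .
  qed
  have "omult (omult h x) h = omult (omult h x) (omult (omult y z) h)" using f by simp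
  also have "\<dots> = h" using hxyzh by (simp add: omult.assoc)
  finally show "omult (omult h x) h = h" .
  have "omult (omult h z) h = omult (omult (omult h (omult x y)) z) h" using e by simp
  also have "\<dots> = h" using hxyzh by (simp add: omult.assoc)
  finally show "omult (omult h z) h = h" .
qed

lemma Sand_middle_factor:
  assumes h: "h \<in> Sand (omult x y) (omult y z)" and y: "omult y y = y"
  shows "omult (omult x y) z = omult (omult x h) z"
proof -
  have f: "omult (omult y z) h = h" and e: "h = omult h (omult x y)"
    and s: "omult (omult (omult x y) h) (omult y z) = omult (omult x y) (omult y z)"
    using h by (auto simp: Sand_def)
  have yh: "omult y h = h" using f omult_idem_left[OF y] by (metis omult.assoc)
  have hy: "omult h y = h" using e y by (metis omult.assoc)
  have "omult (omult x y) z = omult (omult x y) (omult y z)"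
    using omult_idem_left[OF y] by (simp add: omult.assoc)
  also have "\<dots> = omult (omult (omult x y) h) (omult y z)" using s by simp
  also have "\<dots> = omult x (omult (omult (omult y h) y) z)" by (simp add: omult.assoc)
  also have "\<dots> = omult (omult x h) z" using yh hy by (simp add: omult.assoc)
  finally show ?thesis .
qed

text \<open>If x' is an inverse of a b in T, then b x' a lies in the sandwich set of a and b.\<close>
lemma Sand_meets_regular_subsemigroup:
  assumes sub: "subsemigroup T" and reg: "regular_set T" and ab: "a \<in> T" "b \<in> T"
    and idem: "a * a = a" "b * b = b"
  shows "\<exists>h\<in>T. Some h \<in> Sand (Some a) (Some b)"
proof -
  have abT: "a * b \<in> T" using sub ab by (simp add: subsemigroup_def)
  then obtain x where x: "x \<in> T" "a * b * x * (a * b) = a * b" using reg by (auto simp: regular_set_def)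
  define x' where "x' = x * (a * b) * x"
  define h where "h = b * x' * a"
  have hT: "h \<in> T" using x abT ab sub unfolding h_def x'_def subsemigroup_def by blast
  have abx: "a * (b * (x * (a * (b * z)))) = a * (b * z)" for z
    using x(2) by (metis mult.assoc)
  have x'_inv: "a * b * x' * (a * b) = a * b" "x' * (a * b) * x' = x'"
    using x(2) unfolding x'_def by (simp_all add: mult.assoc abx)
  have "h * h = b * (x' * (a * b) * x') * a" unfolding h_def by (simp add: mult.assoc)
  then have "h * h = h" using x'_inv(2) h_def by simp
  moreover have "b * h = h" unfolding h_def using idem by (simp add: mult.assoc[symmetric])
  moreover have "h * a = h" unfolding h_def using idem by (simp add: mult.assoc)
  moreover have "a * h * b = a * b" unfolding h_def using x'_inv(1) by (simp add: mult.assoc)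
  ultimately show ?thesis using hT by (auto simp: Sand_def E1_def)
qed

lemma generated_subsemigroup: "subsemigroup (generated B)"
  unfolding generated_def subsemigroup_def by blast

lemma generated_superset: "B \<subseteq> generated B"
  unfolding generated_def by blast

lemma generated_least: "subsemigroup T \<Longrightarrow> B \<subseteq> T \<Longrightarrow> generated B \<subseteq> T"
  unfolding generated_def by blast

section \<open>The graph on Gamma(X)\<close>

fun height :: "'a gam \<Rightarrow> nat" where
  "height One = 0"
| "height (Gen x) = 1"
| "height (Tri l c r) = Suc (height l)"

lemma height_Gam: "g \<in> Gam X i \<Longrightarrow> height g = i"
proof (induction X i arbitrary: g rule: Gam.induct)
  case (3 X i)
  then show ?case by auto
qed auto

lemma GamAll_iff: "g \<in> GamAll X \<longleftrightarrow> g \<in> Gam X (height g)"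
  unfolding GamAll_def using height_Gam by blast

lemma One_in_GamAll [simp]: "One \<in> GamAll X"
  by (simp add: GamAll_iff)

lemma Gen_in_GamAll [simp]: "Gen x \<in> GamAll X \<longleftrightarrow> x \<in> X"
  by (auto simp: GamAll_iff)

definition child :: "'a gam \<Rightarrow> 'a gam \<Rightarrow> bool" where
  "child c g \<longleftrightarrow> g \<noteq> One \<and> (c = lft g \<or> c = rgt g)"

lemma child_simps [simp]:
  "\<not> child d One" "child d (Gen x) \<longleftrightarrow> d = One" "child d (Tri l c r) \<longleftrightarrow> d = l \<or> d = r"
  by (auto simp: child_def)

lemma child_Gam: "child c g \<Longrightarrow> g \<in> Gam X (Suc i) \<Longrightarrow> c \<in> Gam X i"
  by (cases i) auto

lemma child_GamAll:
  assumes "child c g" "g \<in> GamAll X"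
  shows "c \<in> GamAll X" "height g = Suc (height c)"
proof -
  obtain i where i: "height g = Suc i" using assms(1) by (cases g) auto
  then have "c \<in> Gam X i" using assms child_Gam GamAll_iff by metis
  then show "c \<in> GamAll X" "height g = Suc (height c)"
    using i height_Gam[of c] unfolding GamAll_def by auto
qed

lemma Tri_in_GamAll_iff:
  "Tri l c r \<in> GamAll X \<longleftrightarrow> l \<in> GamAll X \<and> r \<in> GamAll X \<and> l \<noteq> r \<and> child c l \<and> child c r"
proof
  assume "Tri l c r \<in> GamAll X"
  then have Tri: "Tri l c r \<in> Gam X (Suc (height l))" by (simp add: GamAll_iff)
  then obtain j where j: "height l = Suc j" by (cases "height l") auto
  then have "l \<in> Gam X (Suc j) \<and> c \<in> Gam X j \<and> r \<in> Gam X (Suc j) \<and> l \<noteq> r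
      \<and> c \<in> {lft l, rgt l} \<inter> {lft r, rgt r}"
    using Tri by auto
  moreover have "l \<noteq> One" "r \<noteq> One" using calculation height_Gam by force+
  ultimately show "l \<in> GamAll X \<and> r \<in> GamAll X \<and> l \<noteq> r \<and> child c l \<and> child c r"
    by (auto simp: GamAll_def child_def)
next
  assume a: "l \<in> GamAll X \<and> r \<in> GamAll X \<and> l \<noteq> r \<and> child c l \<and> child c r"
  then have "c \<in> GamAll X" "height l = Suc (height c)" "height r = Suc (height c)"
    using child_GamAll by blast+
  then have "Tri l c r \<in> Gam X (Suc (Suc (height c)))"
    using a by (auto simp: GamAll_iff child_def)
  then show "Tri l c r \<in> GamAll X" unfolding GamAll_def by blast
qed

definition adjacent :: "'a gam \<Rightarrow> 'a gam \<Rightarrow> bool" where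
  "adjacent u v \<longleftrightarrow> child u v \<or> child v u"

definition walk_between :: "'a set \<Rightarrow> 'a gam \<Rightarrow> 'a gam \<Rightarrow> 'a gam list \<Rightarrow> bool" where
  "walk_between X u v P \<longleftrightarrow>
     P \<noteq> [] \<and> hd P = u \<and> last P = v \<and> set P \<subseteq> GamAll X \<and> successively adjacent P"

lemma walk_between_append:
  assumes P: "walk_between X u v P" and Q: "walk_between X v w Q"
  shows "walk_between X u w (P @ tl Q)"
proof -
  obtain Q' where Q': "Q = v # Q'" using Q by (cases Q) (auto simp: walk_between_def)
  show ?thesis
    using P Q unfolding Q' walk_between_def
    by (cases Q') (auto simp: successively_append_iff successively_Cons)
qed

lemma walk_between_split:
  "walk_between X u v (xs @ a # ys) \<longleftrightarrow> walk_between X u a (xs @ [a]) \<and> walk_between X a v (a # ys)"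
  by (cases ys) (auto simp: walk_between_def successively_append_iff hd_append)

text \<open>Descend through g^r and ascend through g^l: by the sandwich conditions,
  phi g = phi g (phi g^r phi g^c) and phi g = (phi g^c phi g^l) phi g.\<close>
primrec descent :: "'a gam \<Rightarrow> 'a gam list" where
  "descent One = [One]"
| "descent (Gen x) = [Gen x, One]"
| "descent (Tri l c r) = Tri l c r # r # descent c"

primrec ascent :: "'a gam \<Rightarrow> 'a gam list" where
  "ascent One = [One]"
| "ascent (Gen x) = [One, Gen x]"
| "ascent (Tri l c r) = ascent c @ [l, Tri l c r]"

lemma walk_between_descent: "g \<in> GamAll X \<Longrightarrow> walk_between X g One (descent g)"
proof (induction g)
  case (Tri l c r)
  then have "walk_between X c One (descent c)" "r \<in> GamAll X" "child c r"
    by (auto simp: Tri_in_GamAll_iff dest: child_GamAll)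
  with Tri.prems show ?case
    by (cases "descent c") (auto simp: walk_between_def adjacent_def)
qed (auto simp: walk_between_def adjacent_def)

lemma walk_between_ascent: "g \<in> GamAll X \<Longrightarrow> walk_between X One g (ascent g)"
proof (induction g)
  case (Tri l c r)
  then have "walk_between X One c (ascent c)" "l \<in> GamAll X" "child c l"
    by (auto simp: Tri_in_GamAll_iff dest: child_GamAll)
  with Tri.prems show ?case
    by (auto simp: walk_between_def adjacent_def successively_append_iff)
qed (auto simp: walk_between_def adjacent_def)

fun valley_free :: "'a gam list \<Rightarrow> bool" where
  "valley_free (a # b # c # rest) \<longleftrightarrow> \<not> (child b a \<and> child b c) \<and> valley_free (b # c # rest)"
| "valley_free _ \<longleftrightarrow> True"

lemma not_valley_free:
  "\<not> valley_free P \<Longrightarrow> \<exists>xs a b c ys. P = xs @ a # b # c # ys \<and> child b a \<and> child b c"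
proof (induction P rule: valley_free.induct)
  case (1 a b c rest)
  show ?case
  proof (cases "child b a \<and> child b c")
    case True
    then show ?thesis by (metis append.left_neutral)
  next
    case False
    then obtain xs a' b' c' ys where "b # c # rest = xs @ a' # b' # c' # ys" "child b' a'" "child b' c'"
      using 1 by auto
    then show ?thesis by (metis append_Cons)
  qed
qed auto

lemma valley_free_Cons: "valley_free (a # P) \<Longrightarrow> valley_free P"
  by (cases P rule: valley_free.cases) auto

lemma valley_free_ascends_then_descends:
  "successively adjacent P \<Longrightarrow> valley_free P \<Longrightarrow> P \<noteq> [] \<Longrightarrow>
   \<exists>U D. P = U @ D \<and> U \<noteq> [] \<and> successively child U \<and> successively (\<lambda>a b. child b a) (last U # D)"
proof (induction P rule: induct_list012)
  case (2 a)
  then show ?case by (intro exI[of _ "[a]"] exI[of _ "[]"]) auto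
next
  case (3 a b rest)
  obtain U D where UD: "b # rest = U @ D" "U \<noteq> []" "successively child U"
    "successively (\<lambda>a b. child b a) (last U # D)"
    using "3.IH"(2) "3.prems" valley_free_Cons by fastforce
  have hd_U: "hd U = b" using UD(1,2) by (cases U) auto
  show ?case
  proof (cases "child a b")
    case True
    then show ?thesis using UD hd_U
      by (intro exI[of _ "a # U"] exI[of _ D]) (auto simp: successively_Cons)
  next
    case False
    then have ba: "child b a" using "3.prems"(1) by (simp add: adjacent_def)
    have "U = [b]"
    proof (rule ccontr)
      assume "U \<noteq> [b]"
      then obtain c U' where "U = b # c # U'" using UD(2) hd_U by (cases U) (auto simp: neq_Nil_conv)
      then show False using UD(1,3) "3.prems"(2) ba by auto
    qed
    then show ?thesis using UD ba by (intro exI[of _ "[a]"] exI[of _ "b # rest"]) auto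
  qed
qed auto

lemma One_notin_ascending: "successively child U \<Longrightarrow> hd U \<noteq> One \<Longrightarrow> One \<notin> set U"
  by (induction U rule: induct_list012) (auto simp: child_def)

lemma valley_free_walk_avoids_One:
  assumes M: "walk_between X u v M" "valley_free M" and "u \<noteq> One" "v \<noteq> One"
  shows "One \<notin> set M"
proof -
  have "successively adjacent M" "M \<noteq> []" using M(1) by (auto simp: walk_between_def)
  then obtain U D where UD: "M = U @ D" "U \<noteq> []" "successively child U"
    "successively (\<lambda>a b. child b a) (last U # D)"
    using valley_free_ascends_then_descends M(2) by blast
  have "hd U = u" using UD(1,2) M(1) by (simp add: walk_between_def)
  then have not_U: "One \<notin> set U"
    using One_notin_ascending[OF UD(3)] \<open>u \<noteq> One\<close> by simp
  have "hd (rev (last U # D)) = v"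
    using UD(1,2) M(1) by (cases D) (auto simp: walk_between_def hd_rev)
  moreover have "successively child (rev (last U # D))"
    using UD(4) by (simp only: successively_rev)
  ultimately have "One \<notin> set (rev (last U # D))"
    using One_notin_ascending \<open>v \<noteq> One\<close> by metis
  then show ?thesis using not_U UD(1) by auto
qed

lemma height_le_on_walk: "walk_between X u v P \<Longrightarrow> x \<in> set P \<Longrightarrow> height x \<le> height u + length P"
proof (induction P arbitrary: u)
  case (Cons a P)
  show ?case
  proof (cases "x = a \<or> P = []")
    case False
    then have "walk_between X (hd P) v P" "adjacent a (hd P)" "hd P \<in> GamAll X" "a \<in> GamAll X"
      using Cons.prems by (auto simp: walk_between_def successively_Cons)
    moreover from this(2-4) have "height (hd P) \<le> Suc (height a)"
      by (auto simp: adjacent_def dest: child_GamAll)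
    ultimately show ?thesis using Cons False by (force simp: walk_between_def)
  qed (use Cons.prems in \<open>auto simp: walk_between_def\<close>)
qed (simp add: walk_between_def)

definition height_sum :: "'a gam list \<Rightarrow> nat" where
  "height_sum P = sum_list (map height P)"

lemma height_sum_walk_le:
  assumes "walk_between X u v P"
  shows "height_sum P \<le> length P * (height u + length P)"
proof -
  have "height_sum P \<le> (\<Sum>x\<leftarrow>P. height u + length P)"
    unfolding height_sum_def by (rule sum_list_mono) (use height_le_on_walk[OF assms] in auto)
  also have "\<dots> = length P * (height u + length P)" by (simp add: sum_list_triv)
  finally show ?thesis .
qed

text \<open>Removing a valley either shortens a walk, or keeps its length and raises its height sum,
  which height_sum_walk_le bounds.\<close>
definition walk_measure :: "('a gam list \<times> 'a gam list) set" where
  "walk_measure = measures [length, \<lambda>P. length P * (height (hd P) + length P) - height_sum P]"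

lemma wf_walk_measure: "wf walk_measure"
  by (simp add: walk_measure_def)

section \<open>Walk products of a skeleton mapping\<close>

definition walk_prod :: "('a gam \<Rightarrow> 'b::semigroup_mult option) \<Rightarrow> 'a gam list \<Rightarrow> 'b option" where
  "walk_prod \<phi> P = foldr (\<lambda>g. omult (\<phi> g)) P None"

lemma walk_prod_simps [simp]:
  "walk_prod \<phi> [] = None" "walk_prod \<phi> (g # P) = omult (\<phi> g) (walk_prod \<phi> P)"
  by (simp_all add: walk_prod_def)

lemma walk_prod_append [simp]: "walk_prod \<phi> (P @ Q) = omult (walk_prod \<phi> P) (walk_prod \<phi> Q)"
  by (induction P) (auto simp: omult.assoc)

locale skeleton =
  fixes X :: "'a set" and \<phi> :: "'a gam \<Rightarrow> 'b::semigroup_mult option"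
  assumes skeleton_mapping: "skeleton_mapping X \<phi>"
begin

lemma idem: "g \<in> GamAll X \<Longrightarrow> omult (\<phi> g) (\<phi> g) = \<phi> g"
  using skeleton_mapping by (auto simp: skeleton_mapping_def E1_def)

lemma Tri_Sand:
  assumes "Tri l c r \<in> GamAll X"
  shows "\<phi> (Tri l c r) \<in> Sand (omult (\<phi> r) (\<phi> c)) (omult (\<phi> c) (\<phi> l))"
proof -
  have "l \<noteq> One" using assms by (auto simp: Tri_in_GamAll_iff child_def)
  then have "2 \<le> height (Tri l c r)" by (cases l) auto
  moreover have "Tri l c r \<in> Gam X (height (Tri l c r))" using assms by (simp only: GamAll_iff)
  ultimately show ?thesis using skeleton_mapping unfolding skeleton_mapping_def by fastforce
qed

lemma child_absorb:
  assumes "child d g" "g \<in> GamAll X"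
  shows "omult (omult (\<phi> g) (\<phi> d)) (\<phi> g) = \<phi> g"
proof (cases g)
  case (Gen x)
  then have "d = One" "omult (\<phi> g) (\<phi> One) = \<phi> g"
    using assms skeleton_mapping by (auto simp: skeleton_mapping_def)
  then show ?thesis using idem[OF assms(2)] by simp
next
  case (Tri l c r)
  then have "c \<in> GamAll X" "d = l \<or> d = r"
    using assms by (auto simp: Tri_in_GamAll_iff dest: child_GamAll)
  then show ?thesis
    using Sand_absorbs_outer[OF Tri_Sand idem] assms(2) Tri by blast
qed (use assms in simp)

lemma not_None: "g \<in> GamAll X \<Longrightarrow> g \<noteq> One \<Longrightarrow> \<phi> g \<noteq> None"
proof (induction g)
  case (Gen x)
  then show ?case using skeleton_mapping by (auto simp: skeleton_mapping_def)
next
  case (Tri l c r)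
  then have "r \<in> GamAll X" "r \<noteq> One" by (auto simp: Tri_in_GamAll_iff child_def)
  then obtain s where s: "\<phi> r = Some s" using Tri.IH(3) by blast
  have "\<phi> (Tri l c r) = omult (\<phi> (Tri l c r)) (omult (\<phi> r) (\<phi> c))"
    using Tri_Sand[OF Tri.prems(1)] by (auto simp: Sand_def)
  then show ?case using s by (cases "\<phi> c"; cases "\<phi> (Tri l c r)") auto
qed simp

lemma walk_prod_absorbs_hd:
  "P \<noteq> [] \<Longrightarrow> hd P \<in> GamAll X \<Longrightarrow> omult (\<phi> (hd P)) (walk_prod \<phi> P) = walk_prod \<phi> P"
  by (cases P) (auto simp: omult_idem_left[OF idem])

lemma walk_prod_absorbs_last:
  assumes "P \<noteq> []" "last P \<in> GamAll X"
  shows "omult (walk_prod \<phi> P) (\<phi> (last P)) = walk_prod \<phi> P"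
proof -
  have "walk_prod \<phi> P = omult (walk_prod \<phi> (butlast P)) (\<phi> (last P))"
    using assms(1) by (metis append_butlast_last_id walk_prod_append walk_prod_simps omult.right_neutral)
  then show ?thesis using idem[OF assms(2)] by (simp add: omult.assoc)
qed

lemma walk_prod_join:
  assumes P: "walk_between X u v P" and Q: "walk_between X v w Q"
  shows "walk_prod \<phi> (P @ tl Q) = omult (walk_prod \<phi> P) (walk_prod \<phi> Q)"
proof -
  have "walk_prod \<phi> Q = omult (\<phi> v) (walk_prod \<phi> (tl Q))"
    using Q by (cases Q) (auto simp: walk_between_def)
  moreover have "omult (walk_prod \<phi> P) (\<phi> v) = walk_prod \<phi> P"
    using P by (auto simp: walk_between_def intro!: walk_prod_absorbs_last)
  ultimately show ?thesis by (metis walk_prod_append omult.assoc)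
qed

lemma walk_prod_descent: "g \<in> GamAll X \<Longrightarrow> walk_prod \<phi> (descent g) = \<phi> g"
proof (induction g)
  case (Gen x)
  then show ?case using skeleton_mapping by (auto simp: skeleton_mapping_def)
next
  case (Tri l c r)
  then have "walk_prod \<phi> (descent c) = \<phi> c"
    by (auto simp: Tri_in_GamAll_iff dest: child_GamAll)
  moreover have "omult (\<phi> (Tri l c r)) (omult (\<phi> r) (\<phi> c)) = \<phi> (Tri l c r)"
    using Tri_Sand[OF Tri.prems] by (auto simp: Sand_def)
  ultimately show ?case by simp
qed simp

lemma walk_prod_ascent: "g \<in> GamAll X \<Longrightarrow> walk_prod \<phi> (ascent g) = \<phi> g"
proof (induction g)
  case (Gen x)
  then show ?case using skeleton_mapping by (auto simp: skeleton_mapping_def)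
next
  case (Tri l c r)
  then have "walk_prod \<phi> (ascent c) = \<phi> c"
    by (auto simp: Tri_in_GamAll_iff dest: child_GamAll)
  moreover have "omult (omult (\<phi> c) (\<phi> l)) (\<phi> (Tri l c r)) = \<phi> (Tri l c r)"
    using Tri_Sand[OF Tri.prems] by (auto simp: Sand_def)
  ultimately show ?case by (simp add: omult.assoc)
qed simp

lemma walk_prod_descending_rev:
  "set (a # L) \<subseteq> GamAll X \<Longrightarrow> successively (\<lambda>x y. child y x) (a # L) \<Longrightarrow>
   omult (walk_prod \<phi> (a # L)) (walk_prod \<phi> (rev (a # L))) = \<phi> a"
proof (induction L arbitrary: a)
  case Nil
  then show ?case using idem[of a] by simp
next
  case (Cons b L)
  have IH: "omult (walk_prod \<phi> (b # L)) (walk_prod \<phi> (rev (b # L))) = \<phi> b"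
    using Cons by simp
  have rev_prod: "walk_prod \<phi> (rev (a # b # L)) = omult (walk_prod \<phi> (rev (b # L))) (\<phi> a)"
    by (simp add: omult.assoc)
  have "omult (walk_prod \<phi> (a # b # L)) (walk_prod \<phi> (rev (a # b # L)))
      = omult (omult (\<phi> a) (omult (walk_prod \<phi> (b # L)) (walk_prod \<phi> (rev (b # L))))) (\<phi> a)"
    by (simp only: rev_prod walk_prod_simps(2)[of \<phi> a "b # L"] omult.assoc)
  also have "\<dots> = \<phi> a" using IH child_absorb[of b a] Cons.prems by simp
  finally show ?case .
qed

text \<open>Split P at its peak m into an ascending part U and a descending part D: the products of
  rev U @ U and of (m # D) @ rev (m # D) both collapse to phi m by child_absorb.\<close>
lemma valley_free_walk_prod_regular:
  assumes P: "walk_between X u v P" "valley_free P"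
  shows "omult (omult (walk_prod \<phi> P) (walk_prod \<phi> (rev P))) (walk_prod \<phi> P) = walk_prod \<phi> P"
proof -
  have "successively adjacent P" "P \<noteq> []" using P(1) by (auto simp: walk_between_def)
  then obtain U D where UD: "P = U @ D" "U \<noteq> []" "successively child U"
    "successively (\<lambda>a b. child b a) (last U # D)"
    using valley_free_ascends_then_descends P(2) by blast
  define m where "m = last U"
  have G: "set (m # D) \<subseteq> GamAll X" "set (rev U) \<subseteq> GamAll X"
    using P(1) UD(1,2) unfolding m_def walk_between_def by auto
  have "hd (rev U) = m" "rev U \<noteq> []" using UD(2) by (simp_all add: m_def hd_rev)
  then obtain U' where U': "rev U = m # U'" by (cases "rev U") auto
  have up: "omult (walk_prod \<phi> (rev U)) (walk_prod \<phi> U) = \<phi> m"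
    using walk_prod_descending_rev[of m U'] G(2) UD(3) unfolding U'
    by (metis U' rev_rev_ident successively_rev)
  have down: "omult (walk_prod \<phi> (m # D)) (walk_prod \<phi> (rev (m # D))) = \<phi> m"
    using walk_prod_descending_rev[of m D] G(1) UD(4) m_def by simp
  have "m \<in> GamAll X" using G(1) by simp
  then have peak: "omult (walk_prod \<phi> U) (\<phi> m) = walk_prod \<phi> U"
    using walk_prod_absorbs_last[OF UD(2)] m_def by simp
  have up': "omult (walk_prod \<phi> (rev U)) (omult (walk_prod \<phi> U) z) = omult (\<phi> m) z" for z
    using up by (metis omult.assoc)
  have down': "omult (\<phi> m) (omult (walk_prod \<phi> D) (omult (walk_prod \<phi> (rev D)) (omult (\<phi> m) z)))
      = omult (\<phi> m) z" for z
    using down by (simp add: omult.assoc) (metis omult.assoc)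
  have peak': "omult (walk_prod \<phi> U) (omult (\<phi> m) z) = omult (walk_prod \<phi> U) z" for z
    using peak by (metis omult.assoc)
  have "omult (omult (walk_prod \<phi> P) (walk_prod \<phi> (rev P))) (walk_prod \<phi> P)
     = omult (walk_prod \<phi> U) (omult (walk_prod \<phi> D) (omult (walk_prod \<phi> (rev D))
         (omult (walk_prod \<phi> (rev U)) (omult (walk_prod \<phi> U) (walk_prod \<phi> D)))))"
    using UD(1) by (simp add: omult.assoc)
  also have "\<dots> = omult (walk_prod \<phi> U) (omult (\<phi> m) (omult (walk_prod \<phi> D)
      (omult (walk_prod \<phi> (rev D)) (omult (\<phi> m) (walk_prod \<phi> D)))))"
    by (simp only: up' peak')
  also have "\<dots> = walk_prod \<phi> P"
    using UD(1) by (simp only: down' peak' walk_prod_append)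
  finally show ?thesis .
qed

lemma walk_prod_backtrack:
  assumes "child b a" "a \<in> GamAll X"
  shows "walk_prod \<phi> (xs @ a # b # a # ys) = walk_prod \<phi> (xs @ a # ys)"
proof -
  have "omult (\<phi> a) (omult (\<phi> b) (omult (\<phi> a) z)) = omult (\<phi> a) z" for z
    using child_absorb[OF assms] by (metis omult.assoc)
  then show ?thesis by simp
qed

lemma walk_prod_lift_valley:
  assumes "Tri c b a \<in> GamAll X" "b \<in> GamAll X"
  shows "walk_prod \<phi> (xs @ a # Tri c b a # c # ys) = walk_prod \<phi> (xs @ a # b # c # ys)"
proof -
  have "omult (\<phi> a) (omult (\<phi> (Tri c b a)) (omult (\<phi> c) z))
      = omult (\<phi> a) (omult (\<phi> b) (omult (\<phi> c) z))" for z
    using Sand_middle_factor[OF Tri_Sand[OF assms(1)] idem[OF assms(2)]] by (metis omult.assoc)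
  then show ?thesis by simp
qed

lemma remove_valley:
  assumes P: "walk_between X u v P" and "\<not> valley_free P"
  shows "\<exists>P'. walk_between X u v P' \<and> walk_prod \<phi> P' = walk_prod \<phi> P \<and> (P', P) \<in> walk_measure"
proof -
  obtain xs a b c ys where P_eq: "P = xs @ a # b # c # ys" and ba: "child b a" and bc: "child b c"
    using not_valley_free assms(2) by blast
  have G: "a \<in> GamAll X" "b \<in> GamAll X" "c \<in> GamAll X"
    using P P_eq by (auto simp: walk_between_def)
  show ?thesis
  proof (cases "a = c")
    case True
    define P' where "P' = xs @ a # ys"
    have "walk_prod \<phi> P' = walk_prod \<phi> P"
      using walk_prod_backtrack[OF ba G(1)] by (simp add: P_eq P'_def True)
    moreover have "walk_between X u v P'"
      using P walk_between_append[of X u a "xs @ [a]" v "a # ys"] walk_between_split[of X u v]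
      unfolding P_eq P'_def True by (metis append_Cons append_Nil append_assoc list.sel(3))
    moreover have "(P', P) \<in> walk_measure" by (simp add: P_eq P'_def walk_measure_def)
    ultimately show ?thesis by blast
  next
    case False
    define k where "k = Tri c b a"
    have k: "k \<in> GamAll X" "child a k" "child c k"
      using G False ba bc by (auto simp: k_def Tri_in_GamAll_iff)
    define P' where "P' = xs @ a # k # c # ys"
    have "walk_between X a c [a, k, c]"
      using G k by (auto simp: walk_between_def adjacent_def)
    then have walk: "walk_between X u v P'"
      using P walk_between_split[of X u v "xs @ [a, b]" c ys] walk_between_split[of X u v xs a "b # c # ys"]
        walk_between_append[of X u a "xs @ [a]" c "[a, k, c]"] walk_between_append[of X u c _ v "c # ys"]
      unfolding P_eq P'_def by fastforce
    have "walk_prod \<phi> P' = walk_prod \<phi> P"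
      using walk_prod_lift_valley[OF k(1)[unfolded k_def] G(2)] by (simp add: P_eq P'_def k_def)
    moreover have "height_sum P' = height_sum P + 2"
      using child_GamAll(2)[OF ba G(1)] child_GamAll(2)[OF bc G(3)]
      by (simp add: P_eq P'_def k_def height_sum_def)
    moreover have "hd P' = hd P" "length P' = length P" by (cases xs; simp add: P_eq P'_def)+
    moreover have "height_sum P' \<le> length P' * (height u + length P')"
      using height_sum_walk_le[OF walk] .
    moreover have "hd P = u" using P by (simp add: walk_between_def)
    ultimately show ?thesis using walk by (auto simp: walk_measure_def)
  qed
qed

lemma valley_free_walk_exists:
  "walk_between X u v P \<Longrightarrow> \<exists>M. walk_between X u v M \<and> valley_free M \<and> walk_prod \<phi> M = walk_prod \<phi> P"
proof (induction P rule: wf_induct[OF wf_walk_measure])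
  case (1 P)
  show ?case
  proof (cases "valley_free P")
    case False
    then obtain P' where "walk_between X u v P'" "walk_prod \<phi> P' = walk_prod \<phi> P" "(P', P) \<in> walk_measure"
      using remove_valley "1.prems" by blast
    then show ?thesis using "1.IH" by metis
  qed (use "1.prems" in blast)
qed

definition walk_products :: "'b set" where
  "walk_products = {t. \<exists>u v P. u \<noteq> One \<and> v \<noteq> One \<and> walk_between X u v P \<and> walk_prod \<phi> P = Some t}"

lemma skeleton_subset_walk_products: "skeleton_of X \<phi> \<subseteq> walk_products"
proof
  fix t assume "t \<in> skeleton_of X \<phi>"
  then obtain g where "g \<in> GamAll X" "g \<noteq> One" "\<phi> g = Some t"
    unfolding skeleton_of_def by force
  then show "t \<in> walk_products" unfolding walk_products_def
    by (intro CollectI exI[of _ g] exI[of _ "[g]"]) (auto simp: walk_between_def)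
qed

lemma subsemigroup_walk_products: "subsemigroup walk_products"
  unfolding subsemigroup_def
proof (intro ballI)
  fix s t assume "s \<in> walk_products" "t \<in> walk_products"
  then obtain u v P u' v' Q where
    P: "u \<noteq> One" "walk_between X u v P" "walk_prod \<phi> P = Some s" and
    Q: "v' \<noteq> One" "walk_between X u' v' Q" "walk_prod \<phi> Q = Some t"
    unfolding walk_products_def by blast
  have G: "v \<in> GamAll X" "u' \<in> GamAll X"
    using P(2) Q(2) last_in_set[of P] hd_in_set[of Q] by (auto simp: walk_between_def)
  define AQ where "AQ = ascent u' @ tl Q"
  have AQ: "walk_between X One v' AQ" "walk_prod \<phi> AQ = walk_prod \<phi> Q"
    using walk_between_append[OF walk_between_ascent[OF G(2)] Q(2)]
      walk_prod_join[OF walk_between_ascent[OF G(2)] Q(2)] walk_prod_ascent[OF G(2)]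
      walk_prod_absorbs_hd[of Q] Q(2) G(2)
    by (auto simp: AQ_def walk_between_def)
  define DAQ where "DAQ = descent v @ tl AQ"
  have DAQ: "walk_between X v v' DAQ" "walk_prod \<phi> DAQ = omult (\<phi> v) (walk_prod \<phi> Q)"
    using walk_between_append[OF walk_between_descent[OF G(1)] AQ(1)]
      walk_prod_join[OF walk_between_descent[OF G(1)] AQ(1)] walk_prod_descent[OF G(1)] AQ(2)
    by (auto simp: DAQ_def)
  define W where "W = P @ tl DAQ"
  have "walk_prod \<phi> W = omult (omult (walk_prod \<phi> P) (\<phi> v)) (walk_prod \<phi> Q)"
    using walk_prod_join[OF P(2) DAQ(1)] DAQ(2) by (simp add: W_def omult.assoc)
  also have "\<dots> = Some (s * t)"
    using walk_prod_absorbs_last[of P] P(2,3) Q(3) G(1) by (auto simp: walk_between_def)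
  finally show "s * t \<in> walk_products"
    using walk_between_append[OF P(2) DAQ(1)] P(1) Q(1) unfolding walk_products_def W_def by blast
qed

lemma walk_prod_in_generated:
  "L \<noteq> [] \<Longrightarrow> set L \<subseteq> GamAll X - {One} \<Longrightarrow> \<exists>x\<in>generated (skeleton_of X \<phi>). walk_prod \<phi> L = Some x"
proof (induction L)
  case (Cons g L)
  have "\<phi> g \<noteq> None" using not_None Cons.prems by auto
  then obtain s where s: "\<phi> g = Some s" by blast
  then have "s \<in> skeleton_of X \<phi>" using Cons.prems unfolding skeleton_of_def by force
  then have s_gen: "s \<in> generated (skeleton_of X \<phi>)" using generated_superset by blast
  show ?case
  proof (cases "L = []")
    case False
    then obtain x where "x \<in> generated (skeleton_of X \<phi>)" "walk_prod \<phi> L = Some x"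
      using Cons by auto
    then show ?thesis using s s_gen generated_subsemigroup by (auto simp: subsemigroup_def)
  qed (use s s_gen in simp)
qed simp

theorem regular_generated_skeleton: "regular_set (generated (skeleton_of X \<phi>))"
  unfolding regular_set_def
proof
  fix a assume "a \<in> generated (skeleton_of X \<phi>)"
  then have "a \<in> walk_products"
    using generated_least[OF subsemigroup_walk_products skeleton_subset_walk_products] by blast
  then obtain u v P where P: "u \<noteq> One" "v \<noteq> One" "walk_between X u v P" "walk_prod \<phi> P = Some a"
    unfolding walk_products_def by blast
  obtain M where M: "walk_between X u v M" "valley_free M" "walk_prod \<phi> M = Some a"
    using valley_free_walk_exists[OF P(3)] P(4) by auto
  have "One \<notin> set M" using valley_free_walk_avoids_One M(1,2) P(1,2) by blast
  then have "rev M \<noteq> []" "set (rev M) \<subseteq> GamAll X - {One}" using M(1) by (auto simp: walk_between_def)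
  then obtain x where x: "x \<in> generated (skeleton_of X \<phi>)" "walk_prod \<phi> (rev M) = Some x"
    using walk_prod_in_generated by blast
  have "a * x * a = a" using valley_free_walk_prod_regular[OF M(1,2)] M(3) x(2) by simp
  then show "\<exists>x\<in>generated (skeleton_of X \<phi>). a * x * a = a" using x(1) by blast
qed

end

section \<open>Skeleton mappings into a regular subsemigroup\<close>

definition sandwich_in :: "'b::semigroup_mult set \<Rightarrow> 'b option \<Rightarrow> 'b option \<Rightarrow> 'b option" where
  "sandwich_in T e f = (SOME h. h \<in> Sand e f \<inter> Some ` T)"

lemma sandwich_in:
  assumes "subsemigroup T" "regular_set T" "e \<in> Some ` T" "f \<in> Some ` T"
    and "omult e e = e" "omult f f = f"
  shows "sandwich_in T e f \<in> Sand e f \<inter> Some ` T"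
proof -
  obtain a b where ab: "e = Some a" "f = Some b" "a \<in> T" "b \<in> T" using assms(3,4) by blast
  then obtain h where "h \<in> T" "Some h \<in> Sand e f"
    using Sand_meets_regular_subsemigroup[OF assms(1,2) ab(3,4)] assms(5,6) by auto
  then have "\<exists>h. h \<in> Sand e f \<inter> Some ` T" by blast
  then show ?thesis unfolding sandwich_in_def by (rule someI_ex)
qed

primrec skeleton_into :: "('a \<Rightarrow> 'b::semigroup_mult) \<Rightarrow> 'b set \<Rightarrow> 'a gam \<Rightarrow> 'b option" where
  "skeleton_into p T One = S1_unit"
| "skeleton_into p T (Gen x) = Some (p x)"
| "skeleton_into p T (Tri l c r) =
     sandwich_in T (omult (skeleton_into p T r) (skeleton_into p T c))
                   (omult (skeleton_into p T c) (skeleton_into p T l))"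

lemma omult_in_subsemigroup:
  assumes "subsemigroup T" "x \<in> Some ` T" "y \<in> insert S1_unit (Some ` T)"
  shows "omult x y \<in> Some ` T" "omult y x \<in> Some ` T"
  using assms by (auto simp: subsemigroup_def S1_unit)

lemma skeleton_into_invariant:
  assumes T: "subsemigroup T" "regular_set T" and p: "p ` X \<subseteq> T \<inter> ES"
  defines "\<psi> \<equiv> skeleton_into p T"
  shows "g \<in> GamAll X \<Longrightarrow> (g \<noteq> One \<longrightarrow> \<psi> g \<in> Some ` T) \<and> omult (\<psi> g) (\<psi> g) = \<psi> g
    \<and> (\<forall>d. child d g \<longrightarrow> omult (omult (\<psi> g) (\<psi> d)) (\<psi> g) = \<psi> g)
    \<and> (\<forall>l c r. g = Tri l c r \<longrightarrow> \<psi> g \<in> Sand (omult (\<psi> r) (\<psi> c)) (omult (\<psi> c) (\<psi> l)))"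
proof (induction g)
  case One
  then show ?case by (simp add: \<psi>_def S1_unit_idem)
next
  case (Gen x)
  then have "p x \<in> T" "p x * p x = p x" using p by (auto simp: ES_def)
  then show ?case by (auto simp: \<psi>_def S1_unit)
next
  case (Tri l c r)
  then have G: "l \<in> GamAll X" "r \<in> GamAll X" "c \<in> GamAll X" "child c l" "child c r"
    by (auto simp: Tri_in_GamAll_iff dest: child_GamAll)
  then have "l \<noteq> One" "r \<noteq> One" by (auto simp: child_def)
  then have l: "\<psi> l \<in> Some ` T" "omult (omult (\<psi> l) (\<psi> c)) (\<psi> l) = \<psi> l"
    and r: "\<psi> r \<in> Some ` T" "omult (omult (\<psi> r) (\<psi> c)) (\<psi> r) = \<psi> r"
    using Tri.IH(1,3) G by auto
  have c: "\<psi> c \<in> insert S1_unit (Some ` T)" "omult (\<psi> c) (\<psi> c) = \<psi> c"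
    using Tri.IH(2)[OF G(3)] by (auto simp: \<psi>_def)
  define e where "e = omult (\<psi> r) (\<psi> c)"
  define f where "f = omult (\<psi> c) (\<psi> l)"
  have "e \<in> Some ` T" "f \<in> Some ` T"
    unfolding e_def f_def using omult_in_subsemigroup[OF T(1)] l(1) r(1) c(1) by blast+
  moreover have "omult e e = e" "omult f f = f"
    unfolding e_def f_def using l(2) r(2) by (metis omult.assoc)+
  ultimately have h: "\<psi> (Tri l c r) \<in> Sand e f \<inter> Some ` T"
    using sandwich_in[OF T] by (simp add: \<psi>_def e_def f_def)
  then have "omult (\<psi> (Tri l c r)) (\<psi> (Tri l c r)) = \<psi> (Tri l c r)"
    by (auto simp: Sand_def E1_def)
  then show ?case
    using h Sand_absorbs_outer[of "\<psi> (Tri l c r)" "\<psi> r" "\<psi> c" "\<psi> l"] c(2)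
    by (auto simp: e_def f_def)
qed

lemma skeleton_mapping_into_regular_subsemigroup:
  assumes T: "subsemigroup T" "regular_set T" and p: "p ` X \<subseteq> T" "p ` X \<subseteq> ES" "inj_on p X"
  shows "\<exists>\<psi>. skeleton_mapping X \<psi> \<and> extends X \<psi> p \<and> skeleton_of X \<psi> \<subseteq> T"
proof (intro exI conjI)
  let ?\<psi> = "skeleton_into p T"
  have inv: "g \<in> GamAll X \<Longrightarrow> (g \<noteq> One \<longrightarrow> ?\<psi> g \<in> Some ` T) \<and> omult (?\<psi> g) (?\<psi> g) = ?\<psi> g
      \<and> (\<forall>l c r. g = Tri l c r \<longrightarrow> ?\<psi> g \<in> Sand (omult (?\<psi> r) (?\<psi> c)) (omult (?\<psi> c) (?\<psi> l)))" for g
    using skeleton_into_invariant[OF T, of p X] p(1,2) by blast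
  have "\<forall>g\<in>GamAll X. ?\<psi> g \<in> E1"
    using inv by (force simp: E1_def S1_unit)
  moreover have "\<forall>i\<ge>2. \<forall>g\<in>Gam X i.
      ?\<psi> g \<in> Sand (omult (?\<psi> (rgt g)) (?\<psi> (cen g))) (omult (?\<psi> (cen g)) (?\<psi> (lft g)))"
  proof (intro allI impI ballI)
    fix i g assume g: "2 \<le> i" "g \<in> Gam X i"
    then have "g \<in> GamAll X" unfolding GamAll_def by blast
    moreover obtain j where "i = Suc (Suc j)" using g(1) by (metis add_2_eq_Suc le_Suc_ex)
    then obtain l c r where "g = Tri l c r" using g(2) by auto
    ultimately show "?\<psi> g \<in> Sand (omult (?\<psi> (rgt g)) (?\<psi> (cen g))) (omult (?\<psi> (cen g)) (?\<psi> (lft g)))"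
      using inv by simp
  qed
  ultimately show "skeleton_mapping X ?\<psi>"
    using p by (auto simp: skeleton_mapping_def S1_unit inj_on_def)
  show "extends X ?\<psi> p" by (simp add: extends_def)
  show "skeleton_of X ?\<psi> \<subseteq> T" using inv by (force simp: skeleton_of_def)
qed

lemma extends_image_subset_skeleton_of: "extends X \<phi> \<phi>' \<Longrightarrow> \<phi>' ` X \<subseteq> skeleton_of X \<phi>"
  by (force simp: extends_def skeleton_of_def)

theorem proposition5p6:
  fixes X :: "'a set" and \<phi>' :: "'a \<Rightarrow> 'b::semigroup_mult" and A :: "'b set"
  assumes "X \<noteq> {}"
    and "inj_on \<phi>' X"
    and "\<phi>' ` X \<subseteq> ES"
    and "induces_unique_skeleton X \<phi>' A"
  shows "subsemigroup (generated A) \<and> regular_set (generated A) \<and> \<phi>' ` X \<subseteq> generated A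
     \<and> (\<forall>T. subsemigroup T \<and> regular_set T \<and> \<phi>' ` X \<subseteq> T \<longrightarrow> generated A \<subseteq> T)
     \<and> (generated A = UNIV \<longrightarrow>
          regular_set (UNIV :: 'b set)
        \<and> (\<forall>T. subsemigroup T \<and> regular_set T \<and> \<phi>' ` X \<subseteq> T \<longrightarrow> T = UNIV))"
proof -
  obtain \<phi> where \<phi>: "skeleton_mapping X \<phi>" "extends X \<phi> \<phi>'"
    using assms(4) unfolding induces_unique_skeleton_def by blast
  have unique: "skeleton_of X \<psi> = A" if "skeleton_mapping X \<psi>" "extends X \<psi> \<phi>'" for \<psi>
    using assms(4) that unfolding induces_unique_skeleton_def by blast
  interpret skeleton X \<phi> by (rule skeleton.intro[OF \<phi>(1)])
  have regular: "regular_set (generated A)"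
    using regular_generated_skeleton unique[OF \<phi>] by simp
  have generators: "\<phi>' ` X \<subseteq> generated A"
    using extends_image_subset_skeleton_of[OF \<phi>(2)] generated_superset unique[OF \<phi>] by blast
  have least: "generated A \<subseteq> T" if T: "subsemigroup T" "regular_set T" "\<phi>' ` X \<subseteq> T" for T
  proof -
    obtain \<psi> where "skeleton_mapping X \<psi>" "extends X \<psi> \<phi>'" "skeleton_of X \<psi> \<subseteq> T"
      using skeleton_mapping_into_regular_subsemigroup[OF T assms(3,2)] by blast
    then show ?thesis using unique generated_least T(1) by blast
  qed
  show ?thesis
    using generated_subsemigroup regular generators least by (metis top.extremum_uniqueI)
qed

end
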